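(* Let $n,m\in\mathbb{N}$ and let $(\boldsymbol{d},\boldsymbol{k})$, with $\boldsymbol{d}=(d_1,\dots,d_n)$ and $\boldsymbol{k}=(k_1,\dots,k_m)$ nonnegative integer sequences, be a bipartite degree sequence for the bipartition $X=\{x_1,\dots,x_n\}$, $Y=\{y_1,\dots,y_m\}$. Suppose $g,h\in[n]$ satisfy $d_g\geq d_h+2$, and define $\boldsymbol{d}'$ by $d'_g=d_g-1$, $d'_h=d_h+1$ and $d'_i=d_i$ for $i\in[n]\setminus\{g,h\}$. Then \[|\mathcal{B}(\boldsymbol{d},\boldsymbol{k})|\leq|\mathcal{B}(\boldsymbol{d}',\boldsymbol{k})|.\]
   Context: $\mathcal{B}(\boldsymbol{d},\boldsymbol{k})$ denotes the set of all simple bipartite graphs $B$ with the fixed bipartition $X,Y$ (edges only between $X$ and $Y$) such that $\deg_B(x_i)=d_i$ for all $i\in[n]$ and $\deg_B(y_j)=k_j$ for all $j\in[m]$. *)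

theory Defs
  imports Main
begin

text \<open>X = {x_0,...,x_{n-1}} and Y = {y_0,...,y_{m-1}} are indexed by {0..<n} and {0..<m}.
A simple bipartite graph with this fixed bipartition is a set of pairs (i,j), meaning
the edge x_i y_j.  Degree sequences are functions nat => nat, only values below n resp. m matter.\<close>

definition bip_graphs :: "nat \<Rightarrow> nat \<Rightarrow> (nat \<Rightarrow> nat) \<Rightarrow> (nat \<Rightarrow> nat) \<Rightarrow> (nat \<times> nat) set set" where
  "bip_graphs n m d k =
     {E. E \<subseteq> {0..<n} \<times> {0..<m}
         \<and> (\<forall>i<n. card {j. (i, j) \<in> E} = d i)
         \<and> (\<forall>j<m. card {i. (i, j) \<in> E} = k j)}"

definition is_bip_degree_seq :: "nat \<Rightarrow> nat \<Rightarrow> (nat \<Rightarrow> nat) \<Rightarrow> (nat \<Rightarrow> nat) \<Rightarrow> bool" where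
  "is_bip_degree_seq n m d k \<longleftrightarrow> bip_graphs n m d k \<noteq> {}"

end

(* Split both sets into fibres according to the frame of a graph: its edges outside the rows
   of g and h, the common neighbourhood I of g and h, and the set D of columns adjacent to
   exactly one of them.  Redistributing D between the two rows changes no column degree, so
   within a fibre a graph with row degrees d is a choice of the (d g - |I|)-subset of D adjacent
   to g, and one with row degrees d' a choice of a (d g - |I| - 1)-subset.  As
   |D| = (d g - |I|) + (d h - |I|) \<le> 2 (d g - |I| - 1), the binomial coefficient can only grow. *)
theory Submission
  imports Defs "HOL.Binomial_Plus"
begin

definition row :: "(nat \<times> nat) set \<Rightarrow> nat \<Rightarrow> nat set" where
  "row E i = {j. (i, j) \<in> E}"

definition with_rows :: "nat \<Rightarrow> nat \<Rightarrow> (nat \<times> nat) set \<Rightarrow> nat set \<Rightarrow> nat set \<Rightarrow> (nat \<times> nat) set" where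
  "with_rows g h R A B = R \<union> {g} \<times> A \<union> {h} \<times> B"

definition frame :: "nat \<Rightarrow> nat \<Rightarrow> (nat \<times> nat) set \<Rightarrow> (nat \<times> nat) set \<times> nat set \<times> nat set" where
  "frame g h E = (E - {g, h} \<times> UNIV, row E g \<inter> row E h, (row E g - row E h) \<union> (row E h - row E g))"

lemma card_le_card_if_fibres_le:
  assumes "finite A" "finite B"
    and "\<And>a. a \<in> A \<Longrightarrow> card {x \<in> A. f x = f a} \<le> card {y \<in> B. f' y = f a}"
  shows "card A \<le> card B"
proof -
  have "card A = card (\<Union>c\<in>f ` A. {x \<in> A. f x = c})"
    by (rule arg_cong[where f = card]) blast
  also have "\<dots> = (\<Sum>c\<in>f ` A. card {x \<in> A. f x = c})"
    by (rule card_UN_disjoint) (use assms(1) in auto)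
  also have "\<dots> \<le> (\<Sum>c\<in>f ` A. card {y \<in> B. f' y = c})"
    by (rule sum_mono) (use assms(3) in auto)
  also have "\<dots> = card (\<Union>c\<in>f ` A. {y \<in> B. f' y = c})"
    by (rule card_UN_disjoint [symmetric]) (use assms in auto)
  also have "\<dots> \<le> card B"
    by (rule card_mono) (use assms(2) in auto)
  finally show ?thesis .
qed

lemma binomial_Suc_le:
  fixes n k :: nat
  assumes "n \<le> 2 * k"
  shows "n choose Suc k \<le> n choose k"
proof (cases "Suc k \<le> n")
  case True
  then show ?thesis using assms by (intro binomial_antimono) auto
qed (simp add: binomial_eq_0)

lemma card_eq_if_Diff_eq_and_card_Int_eq:
  assumes "finite X" "finite Y" "X - C = Y - C" "card (X \<inter> C) = card (Y \<inter> C)"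
  shows "card X = card Y"
  using card_Int_Diff[OF assms(1), of C] card_Int_Diff[OF assms(2), of C] assms(3,4) by simp

lemma finite_bip_graphs: "finite (bip_graphs n m d k)"
  by (rule finite_subset[of _ "Pow ({0..<n} \<times> {0..<m})"]) (auto simp: bip_graphs_def)

lemma row_subset_if_bip_graph: "E \<in> bip_graphs n m d k \<Longrightarrow> row E i \<subseteq> {0..<m}"
  by (auto simp: bip_graphs_def row_def)

lemma card_row_if_bip_graph: "E \<in> bip_graphs n m d k \<Longrightarrow> i < n \<Longrightarrow> card (row E i) = d i"
  by (simp add: bip_graphs_def row_def)

lemma with_rows_frame:
  assumes "frame g h E = (R, I, D)"
  shows "E = with_rows g h R (I \<union> (row E g - row E h)) (I \<union> (D - (row E g - row E h)))"
  using assms unfolding frame_def with_rows_def row_def by auto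

lemma frame_with_rows:
  assumes "g \<noteq> h" "R \<inter> {g, h} \<times> UNIV = {}" "I \<inter> D = {}" "S \<subseteq> D"
  shows "frame g h (with_rows g h R (I \<union> S) (I \<union> (D - S))) = (R, I, D)"
  using assms unfolding frame_def with_rows_def row_def by auto

lemma with_rows_in_bip_graphs:
  assumes E: "E \<in> bip_graphs n m d k" and "g < n" "h < n" "g \<noteq> h"
    and AB: "A \<union> B = row E g \<union> row E h" "A \<inter> B = row E g \<inter> row E h"
  shows "with_rows g h (E - {g, h} \<times> UNIV) A B \<in> bip_graphs n m (d(g := card A, h := card B)) k"
    (is "?E' \<in> _")
proof -
  have "A \<subseteq> {0..<m}" "B \<subseteq> {0..<m}"
    using AB(1) row_subset_if_bip_graph[OF E] by blast+
  then have sub: "?E' \<subseteq> {0..<n} \<times> {0..<m}"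
    using E \<open>g < n\<close> \<open>h < n\<close> by (auto simp: bip_graphs_def with_rows_def)
  have "card {j. (i, j) \<in> ?E'} = (d(g := card A, h := card B)) i" if "i < n" for i
    using card_row_if_bip_graph[OF E that] \<open>g \<noteq> h\<close>
    by (auto simp: with_rows_def row_def)
  moreover have "card {i. (i, j) \<in> ?E'} = k j" if "j < m" for j
  proof -
    have "card {i. (i, j) \<in> ?E'} = card {i. (i, j) \<in> E}"
    proof (rule card_eq_if_Diff_eq_and_card_Int_eq[where C = "{g, h}"])
      show "finite {i. (i, j) \<in> ?E'}" "finite {i. (i, j) \<in> E}"
        using sub E by (auto simp: bip_graphs_def intro: finite_subset[of _ "{0..<n}"])
      show "{i. (i, j) \<in> ?E'} - {g, h} = {i. (i, j) \<in> E} - {g, h}"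
        by (auto simp: with_rows_def)
      show "card ({i. (i, j) \<in> ?E'} \<inter> {g, h}) = card ({i. (i, j) \<in> E} \<inter> {g, h})"
        using AB \<open>g \<noteq> h\<close> unfolding row_def with_rows_def
        by (cases "j \<in> A"; cases "j \<in> B"; cases "(g, j) \<in> E"; cases "(h, j) \<in> E")
           (auto simp: Int_insert_left card_insert_if)
    qed
    with E that show ?thesis by (simp add: bip_graphs_def)
  qed
  ultimately show ?thesis using sub by (simp add: bip_graphs_def)
qed

lemma card_frame:
  assumes E: "E \<in> bip_graphs n m d k" and "g < n" "h < n" and fr: "frame g h E = (R, I, D)"
  shows "finite D" "card I \<le> d h" "card D + 2 * card I = d g + d h"
proof -
  have fin: "finite (row E g)" "finite (row E h)"
    using row_subset_if_bip_graph[OF E] by (auto intro: finite_subset)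
  have I: "I = row E g \<inter> row E h" and D: "D = (row E g \<union> row E h) - I"
    using fr by (auto simp: frame_def)
  show "finite D" using fin D by simp
  show "card I \<le> d h"
    using card_mono[OF fin(2), of I] card_row_if_bip_graph[OF E \<open>h < n\<close>] I by auto
  have "card D = card (row E g \<union> row E h) - card I"
    using D I fin card_Diff_subset[of I "row E g \<union> row E h"] by auto
  moreover have "card I \<le> card (row E g \<union> row E h)"
    using I fin by (intro card_mono) auto
  ultimately show "card D + 2 * card I = d g + d h"
    using card_Un_Int[OF fin] I card_row_if_bip_graph[OF E] \<open>g < n\<close> \<open>h < n\<close> by simp
qed

lemma card_bip_graphs_frame_le:
  assumes "g < n" "finite D"
  shows "card {E \<in> bip_graphs n m d k. frame g h E = (R, I, D)} \<le> card D choose (d g - card I)"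
proof -
  let ?P = "{S. S \<subseteq> D \<and> card S = d g - card I}"
  have "{E \<in> bip_graphs n m d k. frame g h E = (R, I, D)}
        \<subseteq> (\<lambda>S. with_rows g h R (I \<union> S) (I \<union> (D - S))) ` ?P"
  proof
    fix E assume "E \<in> {E \<in> bip_graphs n m d k. frame g h E = (R, I, D)}"
    then have E: "E \<in> bip_graphs n m d k" and fr: "frame g h E = (R, I, D)" by auto
    let ?S = "row E g - row E h"
    have Ng: "row E g = I \<union> ?S" "I \<inter> ?S = {}" "?S \<subseteq> D" using fr by (auto simp: frame_def)
    have "finite (row E g)" using row_subset_if_bip_graph[OF E] by (auto intro: finite_subset)
    then have "finite I" "finite ?S" using Ng(1) by (metis finite_Un)+
    then have "card ?S = d g - card I"
      using Ng card_row_if_bip_graph[OF E \<open>g < n\<close>] card_Un_disjoint[of I ?S] by simp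
    then have "?S \<in> ?P" using \<open>?S \<subseteq> D\<close> by simp
    then show "E \<in> (\<lambda>S. with_rows g h R (I \<union> S) (I \<union> (D - S))) ` ?P"
      using with_rows_frame[OF fr] by blast
  qed
  then have "card {E \<in> bip_graphs n m d k. frame g h E = (R, I, D)}
             \<le> card ((\<lambda>S. with_rows g h R (I \<union> S) (I \<union> (D - S))) ` ?P)"
    using \<open>finite D\<close> by (intro card_mono) auto
  also have "\<dots> \<le> card ?P"
    using \<open>finite D\<close> by (intro card_image_le) auto
  also have "card ?P = card D choose (d g - card I)"
    using n_subsets[OF \<open>finite D\<close>] by simp
  finally show ?thesis .
qed

lemma card_bip_graphs_frame_ge:
  assumes E: "E \<in> bip_graphs n m d k" and "g < n" "h < n" "g \<noteq> h"
    and fr: "frame g h E = (R, I, D)" and "s \<le> card D"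
  shows "card D choose s
    \<le> card {E' \<in> bip_graphs n m (d(g := card I + s, h := card I + (card D - s))) k.
             frame g h E' = (R, I, D)}"
proof -
  let ?P = "{S. S \<subseteq> D \<and> card S = s}"
  let ?F = "\<lambda>S. with_rows g h R (I \<union> S) (I \<union> (D - S))"
  have R: "R = E - {g, h} \<times> UNIV" and ID: "I \<inter> D = {}"
    and rows: "I \<union> D = row E g \<union> row E h" "I = row E g \<inter> row E h"
    using fr by (auto simp: frame_def)
  have finD: "finite D" and finI: "finite I"
    using row_subset_if_bip_graph[OF E] fr by (auto simp: frame_def intro: finite_subset)
  have inj: "inj_on ?F ?P"
  proof (rule inj_onI)
    fix S1 S2 assume "S1 \<in> ?P" "S2 \<in> ?P" and "?F S1 = ?F S2"
    then have "row (?F S1) g = row (?F S2) g" by simp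
    moreover have "row (?F S) g = I \<union> S" for S
      using R \<open>g \<noteq> h\<close> by (auto simp: row_def with_rows_def)
    ultimately show "S1 = S2" using ID \<open>S1 \<in> ?P\<close> \<open>S2 \<in> ?P\<close> by blast
  qed
  have image: "?F ` ?P \<subseteq> {E' \<in> bip_graphs n m (d(g := card I + s, h := card I + (card D - s))) k.
             frame g h E' = (R, I, D)}"
  proof (rule image_subsetI)
    fix S assume "S \<in> ?P"
    then have S: "S \<subseteq> D" "card S = s" by auto
    have "finite S" "I \<inter> S = {}" "I \<inter> (D - S) = {}" using S ID finite_subset[OF S(1) finD] by auto
    then have "card (I \<union> S) = card I + s" "card (I \<union> (D - S)) = card I + (card D - s)"
      using S finD finI by (simp_all add: card_Un_disjoint card_Diff_subset)
    moreover have "(I \<union> S) \<union> (I \<union> (D - S)) = row E g \<union> row E h"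
      "(I \<union> S) \<inter> (I \<union> (D - S)) = row E g \<inter> row E h"
      using rows S ID by auto
    ultimately have "?F S \<in> bip_graphs n m (d(g := card I + s, h := card I + (card D - s))) k"
      using with_rows_in_bip_graphs[OF E \<open>g < n\<close> \<open>h < n\<close> \<open>g \<noteq> h\<close>] R by metis
    moreover have "frame g h (?F S) = (R, I, D)"
      using frame_with_rows[OF \<open>g \<noteq> h\<close> _ ID S(1)] R by blast
    ultimately show "?F S \<in> {E' \<in> bip_graphs n m (d(g := card I + s, h := card I + (card D - s))) k.
             frame g h E' = (R, I, D)}" by simp
  qed
  have "card ?P = card (?F ` ?P)" using inj by (rule card_image [symmetric])
  also have "\<dots> \<le> card {E' \<in> bip_graphs n m (d(g := card I + s, h := card I + (card D - s))) k.
             frame g h E' = (R, I, D)}"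
    using image finite_bip_graphs by (intro card_mono) auto
  finally show ?thesis using n_subsets[OF finD] by simp
qed

theorem proposition4p3:
  fixes n m g h :: nat and d k :: "nat \<Rightarrow> nat"
  assumes "is_bip_degree_seq n m d k"
    and "g < n" and "h < n"
    and "d g \<ge> d h + 2"
  shows "card (bip_graphs n m d k)
         \<le> card (bip_graphs n m ((d(g := d g - 1))(h := d h + 1)) k)"
proof (rule card_le_card_if_fibres_le[OF finite_bip_graphs finite_bip_graphs])
  fix E assume E: "E \<in> bip_graphs n m d k"
  have "g \<noteq> h" using assms(4) by auto
  obtain R I D where fr: "frame g h E = (R, I, D)" by (metis prod_cases3)
  note sizes = card_frame[OF E \<open>g < n\<close> \<open>h < n\<close> fr]
  define s where "s = d g - card I - 1"
  have "card {E \<in> bip_graphs n m d k. frame g h E = (R, I, D)} \<le> card D choose Suc s"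
    using card_bip_graphs_frame_le[OF \<open>g < n\<close> sizes(1)] sizes(2) assms(4)
    by (simp add: s_def Suc_diff_Suc)
  also have "\<dots> \<le> card D choose s"
    using sizes assms(4) by (intro binomial_Suc_le) (simp add: s_def)
  also have "\<dots> \<le> card {E' \<in> bip_graphs n m (d(g := card I + s, h := card I + (card D - s))) k.
                         frame g h E' = (R, I, D)}"
    using sizes assms(4) by (intro card_bip_graphs_frame_ge[OF E \<open>g < n\<close> \<open>h < n\<close> \<open>g \<noteq> h\<close> fr])
      (simp add: s_def)
  finally have "card {E \<in> bip_graphs n m d k. frame g h E = (R, I, D)}
    \<le> card {E' \<in> bip_graphs n m (d(g := card I + s, h := card I + (card D - s))) k.
             frame g h E' = (R, I, D)}" .
  moreover have "card I + s = d g - 1" "card I + (card D - s) = d h + 1"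
    using sizes assms(4) by (simp_all add: s_def)
  ultimately show "card {x \<in> bip_graphs n m d k. frame g h x = frame g h E}
      \<le> card {y \<in> bip_graphs n m ((d(g := d g - 1))(h := d h + 1)) k. frame g h y = frame g h E}"
    using fr by simp
qed

end
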